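(* Let $n\geq 3$. The fibration $q:F_{n+m}(\mathbb{R}P^2)/(S_n\times S_m)\to F_n(\mathbb{R}P^2)/S_n$, which forgets the last $m$ points, admits a cross-section (a continuous map $s$ with $q\circ s=\mathrm{id}$) for $m=kn(2n-1)(2n-2)$ with $k\geq 1$, and for $m=2n(n-1)$.
   Context: $F_k(\Sigma)=\{(p_1,\dots,p_k)\in\Sigma^k: p_i\neq p_j\text{ for } i\neq j\}$ is the ordered configuration space of a surface $\Sigma$; $S_k$ acts by permuting coordinates, and $S_n\times S_m\subset S_{n+m}$ permutes the first $n$ and the last $m$ coordinates separately. The map $q$ sends the class of $(p_1,\dots,p_{n+m})$ to the class of $(p_1,\dots,p_n)$. *)

theory Defs
  imports "HOL-Analysis.Analysis"
begin

definition quotient_topology :: "'a topology \<Rightarrow> ('a \<Rightarrow> 'b) \<Rightarrow> 'b topology" where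
  "quotient_topology X f =
     topology (\<lambda>U. U \<subseteq> f ` topspace X \<and> openin X {x \<in> topspace X. f x \<in> U})"

lemma istopology_quotient:
  "istopology (\<lambda>U. U \<subseteq> f ` topspace X \<and> openin X {x \<in> topspace X. f x \<in> U})"
  unfolding istopology_def
proof (rule conjI; intro allI impI)
  fix S T assume a: "S \<subseteq> f ` topspace X \<and> openin X {x \<in> topspace X. f x \<in> S}"
             "T \<subseteq> f ` topspace X \<and> openin X {x \<in> topspace X. f x \<in> T}"
  have "{x \<in> topspace X. f x \<in> S \<inter> T} =
        {x \<in> topspace X. f x \<in> S} \<inter> {x \<in> topspace X. f x \<in> T}" by auto
  moreover have "openin X ({x \<in> topspace X. f x \<in> S} \<inter> {x \<in> topspace X. f x \<in> T})"
    using a by (intro openin_Int) auto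
  ultimately show "S \<inter> T \<subseteq> f ` topspace X \<and> openin X {x \<in> topspace X. f x \<in> S \<inter> T}"
    using a by auto
next
  fix K assume a: "\<forall>S\<in>K. S \<subseteq> f ` topspace X \<and> openin X {x \<in> topspace X. f x \<in> S}"
  have "{x \<in> topspace X. f x \<in> \<Union>K} = (\<Union>S\<in>K. {x \<in> topspace X. f x \<in> S})" by auto
  then show "\<Union>K \<subseteq> f ` topspace X \<and> openin X {x \<in> topspace X. f x \<in> \<Union>K}"
    using a by (auto intro!: openin_Union)
qed

lemma openin_quotient_topology:
  "openin (quotient_topology X f) U \<longleftrightarrow>
     U \<subseteq> f ` topspace X \<and> openin X {x \<in> topspace X. f x \<in> U}"
    unfolding quotient_topology_def
  by (subst topology_inverse'[OF istopology_quotient]) (rule refl)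

text \<open>The real projective plane: the unit sphere in \<open>\<real>\<^sup>3\<close> modulo the antipodal map;
  a point of \<open>RP2\<close> is the antipodal pair \<open>{x, -x}\<close>.\<close>
definition RP2 :: "(real^3) set topology" where
  "RP2 = quotient_topology (top_of_set (sphere 0 1)) (\<lambda>x. {x, -x})"

text \<open>Ordered configuration space \<open>F_k(X)\<close>: injective maps \<open>{0..<k} \<rightarrow> X\<close>
  (extensional, i.e. elements of \<open>PiE {..<k} (\<lambda>_. topspace X)\<close>), with the
  subspace topology of the product topology.\<close>
definition conf :: "'a topology \<Rightarrow> nat \<Rightarrow> (nat \<Rightarrow> 'a) topology" where
  "conf X k = subtopology (product_topology (\<lambda>_. X) {..<k}) {p. inj_on p {..<k}}"

text \<open>Unordered configuration space \<open>F_n(X)/S_n\<close>: the orbit of \<open>p\<close> is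
  identified with the \<open>n\<close>-element set \<open>p ` {..<n}\<close>; quotient topology.\<close>
definition uconf :: "'a topology \<Rightarrow> nat \<Rightarrow> 'a set topology" where
  "uconf X n = quotient_topology (conf X n) (\<lambda>p. p ` {..<n})"

text \<open>\<open>F_{n+m}(X)/(S_n \<times> S_m)\<close>: the orbit of \<open>p\<close> is identified with the pair
  \<open>(p ` {..<n}, p ` {n..<n+m})\<close>; quotient topology.\<close>
definition pconf :: "'a topology \<Rightarrow> nat \<Rightarrow> nat \<Rightarrow> ('a set \<times> 'a set) topology" where
  "pconf X n m = quotient_topology (conf X (n + m)) (\<lambda>p. (p ` {..<n}, p ` {n..<n+m}))"

text \<open>The forgetful map \<open>q\<close> (forget the last \<open>m\<close> points) is \<open>fst\<close> in this model.
  Existence of a continuous cross-section of \<open>q\<close>.\<close>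
definition has_cross_section :: "'a topology \<Rightarrow> nat \<Rightarrow> nat \<Rightarrow> bool" where
  "has_cross_section X n m \<longleftrightarrow>
     (\<exists>s. continuous_map (uconf X n) (pconf X n m) s \<and>
          (\<forall>x \<in> topspace (uconf X n). fst (s x) = x))"

end

theory Submission
  imports Defs
begin

text \<open>
  Let \<open>P\<close> be a configuration of \<open>n\<close> points of \<open>\<real>P\<^sup>2\<close> and \<open>L\<close> a natural number. For every
  ordered pair \<open>(a, b)\<close> of distinct points of \<open>P\<close>, every lift \<open>x\<close> of \<open>a\<close> and \<open>y\<close> of \<open>b\<close> to the
  unit sphere, and every \<open>l < L\<close>, push \<open>x\<close> along the great circle towards \<open>y\<close> by a tangent
  step of length \<open>\<epsilon> (l + (1 - x \<bullet> y) / 2) / L\<close>, where \<open>\<epsilon>\<close> depends continuously on \<open>P\<close> and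
  is at most half of every projective distance within \<open>P\<close>. Replacing \<open>x\<close> by \<open>-x\<close> negates
  the new point, so the set of new points of \<open>\<real>P\<^sup>2\<close> depends on \<open>P\<close> alone. The steps are too
  short for the new points to meet \<open>P\<close> or to collide when pushed from different points of
  \<open>P\<close>; from the same point, the step length recovers \<open>l\<close> and \<open>x \<bullet> y\<close> and the direction
  recovers \<open>y\<close>. This gives exactly \<open>2 L n (n - 1)\<close> new points. Continuity is checked on
  ordered configurations of lifts to the sphere, which map onto the unordered configuration
  space by a quotient map. The two cases of the theorem are \<open>L = k (2n - 1)\<close> and \<open>L = 1\<close>.
\<close>

section \<open>Quotient maps and configuration spaces\<close>

lemma topspace_quotient_topology:
  "topspace (quotient_topology X f) = f ` topspace X"
proof
  have "openin (quotient_topology X f) (f ` topspace X)"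
    by (auto simp: openin_quotient_topology cong: conj_cong)
  then show "f ` topspace X \<subseteq> topspace (quotient_topology X f)"
    by (rule openin_subset)
  show "topspace (quotient_topology X f) \<subseteq> f ` topspace X"
    using openin_topspace[of "quotient_topology X f"]
    unfolding openin_quotient_topology by (rule conjunct1)
qed

lemma quotient_map_quotient_topology: "quotient_map X (quotient_topology X f) f"
  unfolding quotient_map_def topspace_quotient_topology
  by (auto simp: openin_quotient_topology)

lemma continuous_map_quotient_topology: "continuous_map X (quotient_topology X f) f"
  by (rule quotient_imp_continuous_map[OF quotient_map_quotient_topology])

lemma open_map_product_topology_map:
  assumes "open_map X Y f" and "f ` topspace X = topspace Y"
  shows "open_map (product_topology (\<lambda>_. X) I) (product_topology (\<lambda>_. Y) I)
           (\<lambda>x. restrict (\<lambda>i. f (x i)) I)"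
  unfolding open_map_def
proof (intro allI impI)
  let ?F = "\<lambda>x. restrict (\<lambda>i. f (x i)) I"
  fix S assume S: "openin (product_topology (\<lambda>_. X) I) S"
  show "openin (product_topology (\<lambda>_. Y) I) (?F ` S)"
    unfolding openin_product_topology_alt
  proof
    fix y assume "y \<in> ?F ` S"
    then obtain x where x: "x \<in> S" "y = ?F x" by auto
    from S x obtain U where U: "finite {i \<in> I. U i \<noteq> topspace X}" "\<forall>i\<in>I. openin X (U i)"
      "x \<in> Pi\<^sub>E I U" "Pi\<^sub>E I U \<subseteq> S"
      unfolding openin_product_topology_alt by blast
    have "{i \<in> I. f ` U i \<noteq> topspace Y} \<subseteq> {i \<in> I. U i \<noteq> topspace X}"
      using assms(2) by auto
    then have "finite {i \<in> I. f ` U i \<noteq> topspace Y}"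
      using U(1) finite_subset by blast
    moreover have "\<forall>i\<in>I. openin Y (f ` U i)"
      using U(2) assms(1) by (auto simp: open_map_def)
    moreover have "y \<in> (\<Pi>\<^sub>E i\<in>I. f ` U i)"
      using x U(3) by auto
    moreover have "(\<Pi>\<^sub>E i\<in>I. f ` U i) \<subseteq> ?F ` S"
    proof
      fix z assume z: "z \<in> (\<Pi>\<^sub>E i\<in>I. f ` U i)"
      then have "\<forall>i\<in>I. \<exists>u. u \<in> U i \<and> f u = z i"
        by (fastforce simp: PiE_iff)
      then obtain g where g: "\<forall>i\<in>I. g i \<in> U i \<and> f (g i) = z i"
        by (rule bchoice[elim_format]) blast
      then have "restrict g I \<in> S"
        using U(4) by auto
      moreover have "?F (restrict g I) = z"
        using g z by (auto simp: PiE_iff extensional_def)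
      ultimately show "z \<in> ?F ` S"
        by (blast intro: image_eqI[OF sym])
    qed
    ultimately show "\<exists>V. finite {i \<in> I. V i \<noteq> topspace Y} \<and> (\<forall>i\<in>I. openin Y (V i)) \<and>
        y \<in> Pi\<^sub>E I V \<and> Pi\<^sub>E I V \<subseteq> ?F ` S"
      by (intro exI[where x = "\<lambda>i. f ` U i"] conjI)
  qed
qed

lemma topspace_conf:
  "topspace (conf X k) = {p \<in> PiE {..<k} (\<lambda>_. topspace X). inj_on p {..<k}}"
  by (auto simp: conf_def)

lemma continuous_map_conf_iff:
  "continuous_map Z (conf X k) g \<longleftrightarrow>
     (\<forall>i<k. continuous_map Z X (\<lambda>z. g z i)) \<and>
     (\<forall>z\<in>topspace Z. g z \<in> extensional {..<k} \<and> inj_on (g z) {..<k})"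
  unfolding conf_def continuous_map_in_subtopology continuous_map_componentwise
  by auto

lemma image_conf_lift:
  assumes "f ` topspace X = topspace Y"
  shows "(\<lambda>v. restrict (\<lambda>i. f (v i)) {..<n}) `
           topspace (subtopology (product_topology (\<lambda>_. X) {..<n}) {v. inj_on (\<lambda>i. f (v i)) {..<n}})
         = topspace (conf Y n)"
    (is "?F ` topspace ?A = _")
proof
  show "?F ` topspace ?A \<subseteq> topspace (conf Y n)"
    by (auto simp: topspace_conf inj_on_def PiE_iff simp flip: assms)
  show "topspace (conf Y n) \<subseteq> ?F ` topspace ?A"
  proof
    fix p assume p: "p \<in> topspace (conf Y n)"
    then have "\<forall>i\<in>{..<n}. \<exists>x. x \<in> topspace X \<and> f x = p i"
      using assms by (force simp: topspace_conf PiE_iff)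
    then obtain g where g: "\<forall>i\<in>{..<n}. g i \<in> topspace X \<and> f (g i) = p i"
      by (rule bchoice[elim_format]) blast
    have "?F (restrict g {..<n}) = p"
      using g p by (auto simp: topspace_conf PiE_def extensional_def)
    moreover have "restrict g {..<n} \<in> topspace ?A"
      using g p by (auto simp: topspace_conf inj_on_def)
    ultimately show "p \<in> ?F ` topspace ?A"
      by (blast intro: image_eqI[OF sym])
  qed
qed

lemma quotient_map_conf_lift:
  assumes "continuous_map X Y f" "open_map X Y f" "f ` topspace X = topspace Y"
  shows "quotient_map
           (subtopology (product_topology (\<lambda>_. X) {..<n}) {v. inj_on (\<lambda>i. f (v i)) {..<n}})
           (uconf Y n) (\<lambda>v. (\<lambda>i. f (v i)) ` {..<n})"
proof -
  let ?A = "subtopology (product_topology (\<lambda>_. X) {..<n}) {v. inj_on (\<lambda>i. f (v i)) {..<n}}"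
  let ?F = "\<lambda>v. restrict (\<lambda>i. f (v i)) {..<n}"
  have pre: "{v \<in> topspace (product_topology (\<lambda>_. X) {..<n}). ?F v \<in> {p. inj_on p {..<n}}}
      = topspace (product_topology (\<lambda>_. X) {..<n}) \<inter> {v. inj_on (\<lambda>i. f (v i)) {..<n}}"
    by (auto simp: inj_on_def)
  have "open_map (subtopology (product_topology (\<lambda>_. X) {..<n})
      (topspace (product_topology (\<lambda>_. X) {..<n}) \<inter> {v. inj_on (\<lambda>i. f (v i)) {..<n}}))
      (conf Y n) ?F"
    unfolding conf_def
    by (rule open_map_restriction[OF open_map_product_topology_map[OF assms(2,3)] pre])
  then have "open_map ?A (conf Y n) ?F"
    by (simp only: subtopology_restrict)
  moreover have "continuous_map ?A (conf Y n) ?F"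
  proof -
    have "continuous_map ?A Y (\<lambda>v. f (v i))" if "i < n" for i
      using that by (intro continuous_map_compose[OF _ assms(1), unfolded o_def]
          continuous_map_from_subtopology continuous_map_product_projection) simp
    then show ?thesis
      unfolding continuous_map_conf_iff by (auto simp: inj_on_def)
  qed
  moreover have "?F ` topspace ?A = topspace (conf Y n)"
    using assms(3) by (rule image_conf_lift)
  ultimately have "quotient_map ?A (conf Y n) ?F"
    by (intro continuous_open_imp_quotient_map)
  then have "quotient_map ?A (uconf Y n) ((\<lambda>p. p ` {..<n}) \<circ> ?F)"
    unfolding uconf_def by (rule quotient_map_compose[OF _ quotient_map_quotient_topology])
  moreover have "(\<lambda>p. p ` {..<n}) \<circ> ?F = (\<lambda>v. (\<lambda>i. f (v i)) ` {..<n})"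
    by auto
  ultimately show ?thesis
    by simp
qed

lemma has_cross_section_from_lift:
  assumes quot: "quotient_map A (uconf X n) \<pi>"
    and H: "continuous_map A (conf X (n + m)) H"
    and old: "\<And>a. a \<in> topspace A \<Longrightarrow> H a ` {..<n} = \<pi> a"
    and new: "\<And>a. a \<in> topspace A \<Longrightarrow> H a ` {n..<n+m} = N (\<pi> a)"
  shows "has_cross_section X n m"
proof -
  define s where "s P = (P, N P)" for P
  have "continuous_map A (pconf X n m) ((\<lambda>p. (p ` {..<n}, p ` {n..<n+m})) \<circ> H)"
    unfolding pconf_def by (rule continuous_map_compose[OF H continuous_map_quotient_topology])
  then have "continuous_map A (pconf X n m) (s \<circ> \<pi>)"
    by (rule continuous_map_eq) (simp add: s_def old new)
  then have "continuous_map (uconf X n) (pconf X n m) s"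
    by (rule continuous_compose_quotient_map[OF quot])
  then show ?thesis
    unfolding has_cross_section_def s_def by auto
qed

definition seq_append :: "nat \<Rightarrow> (nat \<Rightarrow> 'a) \<Rightarrow> (nat \<Rightarrow> 'a) \<Rightarrow> nat \<Rightarrow> 'a" where
  "seq_append n f g k = (if k < n then f k else g (k - n))"

lemma seq_append_image_lessThan: "seq_append n f g ` {..<n} = f ` {..<n}"
  by (simp add: seq_append_def)

lemma seq_append_image_shift: "seq_append n f g ` {n..<n + m} = g ` {..<m}"
proof -
  have "{n..<n + m} = (\<lambda>k. k + n) ` {..<m}"
    by (simp add: image_add_atLeastLessThan' lessThan_atLeast0 add.commute)
  moreover have "seq_append n f g (k + n) = g k" for k
    by (simp add: seq_append_def)
  ultimately show ?thesis
    by (simp add: image_image)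
qed

lemma inj_on_seq_append:
  assumes f: "inj_on f {..<n}" and g: "inj_on g {..<m}" and disj: "f ` {..<n} \<inter> g ` {..<m} = {}"
  shows "inj_on (seq_append n f g) {..<n + m}"
proof (rule inj_onI)
  fix k k' assume k: "k \<in> {..<n + m}" and k': "k' \<in> {..<n + m}"
    and eq: "seq_append n f g k = seq_append n f g k'"
  have shift: "k - n \<in> {..<m}" if "k \<in> {..<n + m}" "\<not> k < n" for k
    using that by auto
  consider "k < n" "k' < n" | "k < n" "\<not> k' < n" | "\<not> k < n" "k' < n" | "\<not> k < n" "\<not> k' < n"
    by blast
  then show "k = k'"
  proof cases
    case 1
    then show ?thesis
      using eq f by (simp add: seq_append_def inj_on_def)
  next
    case 2
    then show ?thesis
      using eq disj shift[OF k'] by (auto simp: seq_append_def)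
  next
    case 3
    then show ?thesis
      using eq disj shift[OF k] by (auto simp: seq_append_def)
  next
    case 4
    then have "k - n = k' - n"
      using eq g shift[OF k] shift[OF k'] by (simp add: seq_append_def inj_on_def)
    then show ?thesis
      using 4 by simp
  qed
qed

lemma continuous_map_inner [continuous_intros]:
  fixes f g :: "'a \<Rightarrow> 'b::real_inner"
  shows "continuous_map X euclidean f \<Longrightarrow> continuous_map X euclidean g \<Longrightarrow>
    continuous_map X euclideanreal (\<lambda>x. f x \<bullet> g x)"
  by (simp add: continuous_map_atin tendsto_inner)

lemma continuous_map_scaleR [continuous_intros]:
  fixes g :: "'a \<Rightarrow> 'b::real_normed_vector"
  shows "continuous_map X euclideanreal f \<Longrightarrow> continuous_map X euclidean g \<Longrightarrow>
    continuous_map X euclidean (\<lambda>x. f x *\<^sub>R g x)"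
  by (simp add: continuous_map_atin tendsto_scaleR)

section \<open>The real projective plane\<close>

definition rp_class :: "real^3 \<Rightarrow> (real^3) set" where
  "rp_class x = {x, - x}"

lemma rp_class_eq_iff: "rp_class x = rp_class y \<longleftrightarrow> x = y \<or> x = - y"
  by (auto simp: rp_class_def doubleton_eq_iff)

lemma rp_class_uminus [simp]: "rp_class (- x) = rp_class x"
  by (auto simp: rp_class_def)

lemma mem_rp_class: "x \<in> rp_class y \<longleftrightarrow> x = y \<or> x = - y"
  by (auto simp: rp_class_def)

lemma RP2_eq: "RP2 = quotient_topology (top_of_set (sphere 0 1)) rp_class"
  unfolding RP2_def rp_class_def[abs_def] ..

lemma topspace_RP2: "topspace RP2 = rp_class ` sphere 0 1"
  by (simp add: RP2_eq topspace_quotient_topology)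

lemma continuous_map_rp_class: "continuous_map (top_of_set (sphere 0 1)) RP2 rp_class"
  unfolding RP2_eq by (rule continuous_map_quotient_topology)

lemma open_map_rp_class: "open_map (top_of_set (sphere 0 1)) RP2 rp_class"
  unfolding open_map_def
proof (intro allI impI)
  fix U assume U: "openin (top_of_set (sphere (0::real^3) 1)) U"
  then obtain W where W: "open W" "U = sphere 0 1 \<inter> W"
    by (auto simp: openin_open)
  have "{x \<in> sphere 0 1. rp_class x \<in> rp_class ` U} = sphere 0 1 \<inter> (W \<union> uminus ` W)"
    using W(2) by (auto simp: rp_class_eq_iff image_iff)
  moreover have "open (W \<union> uminus ` W)"
    using W(1) by (simp add: open_negations open_Un)
  ultimately have "openin (top_of_set (sphere 0 1)) {x \<in> sphere 0 1. rp_class x \<in> rp_class ` U}"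
    by (auto simp: openin_open)
  then show "openin RP2 (rp_class ` U)"
    unfolding RP2_eq openin_quotient_topology using U openin_subset by fastforce
qed

section \<open>Pushing a point along a great circle\<close>

lemma abs_inner_less_1:
  fixes x y :: "'a::real_inner"
  assumes "norm x = 1" "norm y = 1" "x \<noteq> y" "x \<noteq> - y"
  shows "\<bar>x \<bullet> y\<bar> < 1"
proof -
  have "\<bar>x \<bullet> y\<bar> \<noteq> norm x * norm y"
    using assms by (subst norm_cauchy_schwarz_abs_eq) auto
  then show ?thesis
    using Cauchy_Schwarz_ineq2[of x y] assms by simp
qed

text \<open>The central projection of the tangent point \<open>x + t u\<close> back to the unit sphere.\<close>

definition sphere_step :: "'a::real_inner \<Rightarrow> 'a \<Rightarrow> real \<Rightarrow> 'a" where
  "sphere_step x u t = (1 / sqrt (1 + t\<^sup>2)) *\<^sub>R (x + t *\<^sub>R u)"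

lemma norm_add_orthogonal_sq:
  fixes x u :: "'a::real_inner"
  assumes "norm x = 1" "norm u = 1" "x \<bullet> u = 0"
  shows "(norm (x + t *\<^sub>R u))\<^sup>2 = 1 + t\<^sup>2"
proof -
  have "x \<bullet> x = 1" "u \<bullet> u = 1" "u \<bullet> x = 0"
    using assms by (simp_all add: inner_commute flip: power2_norm_eq_inner)
  then show ?thesis
    unfolding power2_norm_eq_inner
    by (simp add: inner_add_left inner_add_right assms(3) power2_eq_square)
qed

lemma
  fixes x u :: "'a::real_inner"
  assumes x: "norm x = 1" and u: "norm u = 1" and xu: "x \<bullet> u = 0"
  shows norm_sphere_step: "norm (sphere_step x u t) = 1"
    and inner_sphere_step: "x \<bullet> sphere_step x u t = 1 / sqrt (1 + t\<^sup>2)"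
proof -
  have "norm (x + t *\<^sub>R u) = sqrt (1 + t\<^sup>2)"
    using norm_add_orthogonal_sq[OF assms] by (metis norm_ge_zero real_sqrt_unique)
  moreover have "sqrt (1 + t\<^sup>2) > 0"
    by (simp add: add_pos_nonneg)
  ultimately show "norm (sphere_step x u t) = 1"
    by (simp add: sphere_step_def)
  show "x \<bullet> sphere_step x u t = 1 / sqrt (1 + t\<^sup>2)"
    using x xu by (simp add: sphere_step_def inner_add_right flip: power2_norm_eq_inner)
qed

lemma norm_sphere_step_diff:
  fixes x u :: "'a::real_inner"
  assumes x: "norm x = 1" and u: "norm u = 1" and xu: "x \<bullet> u = 0" and t: "t \<ge> 0"
  shows "norm (sphere_step x u t - x) \<le> t"
proof -
  define r where "r = sqrt (1 + t\<^sup>2)"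
  have r1: "r \<ge> 1" and rr: "r\<^sup>2 = 1 + t\<^sup>2"
    by (simp_all add: r_def add_nonneg_nonneg)
  have "(norm (sphere_step x u t - x))\<^sup>2
      = (norm (sphere_step x u t))\<^sup>2 - 2 * (x \<bullet> sphere_step x u t) + (norm x)\<^sup>2"
    by (simp add: power2_norm_eq_inner inner_diff_left inner_diff_right inner_commute)
  also have "\<dots> = 2 - 2 / r"
    using norm_sphere_step[OF x u xu] inner_sphere_step[OF x u xu] x by (simp add: r_def)
  also have "\<dots> \<le> t\<^sup>2"
  proof -
    have "r * t\<^sup>2 - (2 * r - 2) = (r - 1)\<^sup>2 * (r + 2)"
      using rr by (simp add: power2_eq_square algebra_simps)
    moreover have "(r - 1)\<^sup>2 * (r + 2) \<ge> 0"
      using r1 by simp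
    ultimately have "2 * r - 2 \<le> r * t\<^sup>2"
      by linarith
    then show ?thesis
      using r1 by (simp add: field_simps)
  qed
  finally show ?thesis
    using t by (simp add: real_le_rsqrt power2_le_iff_abs_le)
qed

lemma sphere_step_inj:
  fixes x u u' :: "'a::real_inner"
  assumes x: "norm x = 1" and u: "norm u = 1" "x \<bullet> u = 0" and u': "norm u' = 1" "x \<bullet> u' = 0"
    and t: "t > 0" "t' \<ge> 0" and eq: "sphere_step x u t = sphere_step x u' t'"
  shows "t = t' \<and> u = u'"
proof -
  have "1 / sqrt (1 + t\<^sup>2) = 1 / sqrt (1 + t'\<^sup>2)"
    using inner_sphere_step[OF x u] inner_sphere_step[OF x u'] eq by metis
  then have "t\<^sup>2 = t'\<^sup>2"
    by (simp add: add_nonneg_nonneg)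
  then have tt: "t = t'"
    using t by (simp add: power2_eq_iff_nonneg)
  have "sqrt (1 + t\<^sup>2) > 0"
    by (simp add: add_pos_nonneg)
  then have "x + t *\<^sub>R u = x + t *\<^sub>R u'"
    using eq by (simp add: sphere_step_def tt)
  then show ?thesis
    using t tt by simp
qed

lemma sphere_step_uminus: "sphere_step (- x) (- u) t = - sphere_step x u t"
  by (simp add: sphere_step_def algebra_simps)

definition tangent_dir :: "'a::real_inner \<Rightarrow> 'a \<Rightarrow> 'a" where
  "tangent_dir x y = sgn (y - (x \<bullet> y) *\<^sub>R x)"

lemma norm_tangent_component_sq:
  fixes x y :: "'a::real_inner"
  assumes "norm x = 1" "norm y = 1"
  shows "(norm (y - (x \<bullet> y) *\<^sub>R x))\<^sup>2 = 1 - (x \<bullet> y)\<^sup>2"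
proof -
  have "x \<bullet> x = 1" "y \<bullet> y = 1"
    using assms by (simp_all flip: power2_norm_eq_inner)
  then show ?thesis
    unfolding power2_norm_eq_inner
    by (simp add: inner_diff_left inner_diff_right inner_commute[of y x] power2_eq_square)
qed

lemma tangent_component_nonzero:
  fixes x y :: "'a::real_inner"
  assumes "norm x = 1" "norm y = 1" "\<bar>x \<bullet> y\<bar> < 1"
  shows "y - (x \<bullet> y) *\<^sub>R x \<noteq> 0"
proof -
  have "(norm (y - (x \<bullet> y) *\<^sub>R x))\<^sup>2 > 0"
    using norm_tangent_component_sq[OF assms(1,2)] assms(3) by (simp add: abs_square_less_1)
  then show ?thesis
    by auto
qed

lemma
  fixes x y :: "'a::real_inner"
  assumes x: "norm x = 1" and y: "norm y = 1" and xy: "\<bar>x \<bullet> y\<bar> < 1"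
  shows norm_tangent_dir: "norm (tangent_dir x y) = 1"
    and inner_tangent_dir: "x \<bullet> tangent_dir x y = 0"
proof -
  show "norm (tangent_dir x y) = 1"
    using tangent_component_nonzero[OF assms] by (simp add: tangent_dir_def norm_sgn)
  show "x \<bullet> tangent_dir x y = 0"
    using x by (simp add: tangent_dir_def sgn_div_norm inner_diff_right flip: power2_norm_eq_inner)
qed

lemma tangent_dir_inj:
  fixes x y y' :: "'a::real_inner"
  assumes x: "norm x = 1" and y: "norm y = 1" and y': "norm y' = 1"
    and c: "x \<bullet> y = x \<bullet> y'" and eq: "tangent_dir x y = tangent_dir x y'"
  shows "y = y'"
proof -
  have "norm (y - (x \<bullet> y) *\<^sub>R x) = norm (y' - (x \<bullet> y') *\<^sub>R x)"
    using norm_tangent_component_sq[OF x y] norm_tangent_component_sq[OF x y'] c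
    by (metis norm_ge_zero power2_eq_iff_nonneg)
  then have "y - (x \<bullet> y) *\<^sub>R x = y' - (x \<bullet> y') *\<^sub>R x"
    using eq by (metis sgn_div_norm tangent_dir_def divideR_right scaleR_eq_0_iff norm_eq_zero)
  then show ?thesis
    using c by simp
qed

lemma tangent_dir_uminus: "tangent_dir (- x) y = - tangent_dir x (- y)"
  by (simp add: tangent_dir_def sgn_minus[symmetric] algebra_simps)

text \<open>Since \<open>(1 - c) / 2\<close> lies in \<open>(0, 1)\<close>, the step length determines both \<open>l\<close> and \<open>c\<close>.\<close>

definition step_length :: "nat \<Rightarrow> real \<Rightarrow> real \<Rightarrow> nat \<Rightarrow> real" where
  "step_length L e c l = e * (real l + (1 - c) / 2) / real L"

lemma step_length_bounds:
  assumes "\<bar>c\<bar> < 1" "e > 0" "l < L"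
  shows "0 < step_length L e c l" "step_length L e c l < e"
proof -
  have "0 \<le> real l" "real l + 1 \<le> real L" "-1 < c" "c < 1"
    using assms(1,3) by auto
  then have "0 < real l + (1 - c) / 2" and "real l + (1 - c) / 2 < real L"
    by argo+
  then show "0 < step_length L e c l" "step_length L e c l < e"
    using assms(2) by (simp_all add: step_length_def divide_less_eq)
qed

lemma step_length_inj:
  assumes "\<bar>c\<bar> < 1" "\<bar>c'\<bar> < 1" "e > 0" "L > 0"
    and eq: "step_length L e c l = step_length L e c' l'"
  shows "l = l' \<and> c = c'"
proof -
  have sum: "real l + (1 - c) / 2 = real l' + (1 - c') / 2"
    using eq assms(3,4) by (simp add: step_length_def)
  have c: "-1 < c" "c < 1" "-1 < c'" "c' < 1"
    using assms(1,2) by auto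
  have "l = l'"
  proof (rule linorder_cases[of l l'])
    assume "l < l'"
    then have "real l + 1 \<le> real l'"
      by linarith
    then show ?thesis
      using sum c by argo
  next
    assume "l' < l"
    then have "real l' + 1 \<le> real l"
      by linarith
    then show ?thesis
      using sum c by argo
  qed
  with sum show ?thesis
    by simp
qed

definition new_point :: "nat \<Rightarrow> real \<Rightarrow> 'a::real_inner \<Rightarrow> 'a \<Rightarrow> nat \<Rightarrow> 'a" where
  "new_point L e x y l = sphere_step x (tangent_dir x y) (step_length L e (x \<bullet> y) l)"

lemma new_point_uminus: "new_point L e (- x) y l = - new_point L e x (- y) l"
  by (simp add: new_point_def tangent_dir_uminus sphere_step_uminus)

lemma
  fixes x y :: "'a::real_inner"
  assumes x: "norm x = 1" and y: "norm y = 1" and xy: "\<bar>x \<bullet> y\<bar> < 1"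
    and e: "e > 0" and l: "l < L"
  shows norm_new_point: "norm (new_point L e x y l) = 1"
    and inner_new_point_pos: "0 < x \<bullet> new_point L e x y l"
    and inner_new_point_less_1: "x \<bullet> new_point L e x y l < 1"
    and norm_new_point_diff: "norm (new_point L e x y l - x) < e"
proof -
  define t where "t = step_length L e (x \<bullet> y) l"
  have t: "0 < t" "t < e"
    using step_length_bounds[OF xy e l] by (simp_all add: t_def)
  note u = norm_tangent_dir[OF x y xy] inner_tangent_dir[OF x y xy]
  show "norm (new_point L e x y l) = 1"
    using norm_sphere_step[OF x u] by (simp add: new_point_def)
  have "1 < sqrt (1 + t\<^sup>2)" "0 < 1 + t\<^sup>2"
    using t by (simp_all add: add_pos_nonneg)
  then show "0 < x \<bullet> new_point L e x y l" "x \<bullet> new_point L e x y l < 1"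
    using inner_sphere_step[OF x u] by (simp_all add: new_point_def t_def)
  have "norm (sphere_step x (tangent_dir x y) t - x) \<le> t"
    using norm_sphere_step_diff[OF x u] t(1) by simp
  then show "norm (new_point L e x y l - x) < e"
    using t(2) unfolding new_point_def t_def[symmetric] by linarith
qed

lemma new_point_inj:
  fixes x y y' :: "'a::real_inner"
  assumes x: "norm x = 1" and y: "norm y = 1" "\<bar>x \<bullet> y\<bar> < 1"
    and y': "norm y' = 1" "\<bar>x \<bullet> y'\<bar> < 1" and e: "e > 0" and l: "l < L" "l' < L"
    and eq: "new_point L e x y l = new_point L e x y' l'"
  shows "l = l' \<and> y = y'"
proof -
  note u = norm_tangent_dir[OF x y] inner_tangent_dir[OF x y]
  note u' = norm_tangent_dir[OF x y'] inner_tangent_dir[OF x y']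
  have "step_length L e (x \<bullet> y) l = step_length L e (x \<bullet> y') l'
      \<and> tangent_dir x y = tangent_dir x y'"
  proof (rule sphere_step_inj[OF x u u'])
    show "0 < step_length L e (x \<bullet> y) l" "0 \<le> step_length L e (x \<bullet> y') l'"
      using step_length_bounds[OF y(2) e l(1)] step_length_bounds[OF y'(2) e l(2)] by simp_all
  qed (use eq in \<open>simp add: new_point_def\<close>)
  then have st: "step_length L e (x \<bullet> y) l = step_length L e (x \<bullet> y') l'"
    and td: "tangent_dir x y = tangent_dir x y'"
    by simp_all
  have "0 < L"
    using l(1) by simp
  then have "l = l' \<and> x \<bullet> y = x \<bullet> y'"
    using step_length_inj[OF y(2) y'(2) e _ st] by simp
  then show ?thesis
    using tangent_dir_inj[OF x y(1) y'(1) _ td] by simp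
qed

section \<open>Projective distance and the scale of a configuration\<close>

definition proj_dist :: "'a::real_normed_vector \<Rightarrow> 'a \<Rightarrow> real" where
  "proj_dist x y = min (norm (x - y)) (norm (x + y))"

lemma proj_dist_uminus_left [simp]: "proj_dist (- x) y = proj_dist x y"
  using norm_minus_cancel[of "x + y"] norm_minus_cancel[of "x - y"]
  by (simp add: proj_dist_def min.commute)

lemma proj_dist_uminus_right [simp]: "proj_dist x (- y) = proj_dist x y"
  by (simp add: proj_dist_def min.commute)

lemma proj_dist_pos: "x \<noteq> y \<Longrightarrow> x \<noteq> - y \<Longrightarrow> 0 < proj_dist x y"
  by (auto simp: proj_dist_def add_eq_0_iff2)

lemma proj_dist_le_2: "norm x = 1 \<Longrightarrow> norm y = 1 \<Longrightarrow> proj_dist x y \<le> 2"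
  using norm_triangle_ineq4[of x y] by (simp add: proj_dist_def min.coboundedI1)

lemma continuous_map_proj_dist [continuous_intros]:
  "continuous_map X euclidean f \<Longrightarrow> continuous_map X euclidean g \<Longrightarrow>
   continuous_map X euclideanreal (\<lambda>x. proj_dist (f x) (g x))"
  unfolding proj_dist_def by (intro continuous_intros)

lemma proj_dist_le_norm_diff: "proj_dist x y \<le> norm (x - y)"
  by (simp add: proj_dist_def)

lemma proj_dist_triangle: "proj_dist x z \<le> proj_dist x y + proj_dist y z"
proof -
  have "x - z = (x - y) + (y - z)" "x + z = (x - y) + (y + z)"
    "x + z = (x + y) - (y - z)" "x - z = (x + y) - (y + z)"
    by (simp_all add: algebra_simps)
  then have "norm (x - z) \<le> norm (x - y) + norm (y - z)"
    "norm (x + z) \<le> norm (x - y) + norm (y + z)"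
    "norm (x + z) \<le> norm (x + y) + norm (y - z)"
    "norm (x - z) \<le> norm (x + y) + norm (y + z)"
    by (metis norm_triangle_ineq norm_triangle_ineq4)+
  then show ?thesis
    by (simp add: proj_dist_def min_def)
qed

lemma proj_dist_eq_0: "x = y \<or> x = - y \<Longrightarrow> proj_dist x y = 0"
  by (auto simp: proj_dist_def min_def)

lemma proj_dist_less_of_antipodal_eq:
  assumes "norm (p - x) < e" "norm (q - y) < e" "p = q \<or> p = - q"
  shows "proj_dist x y < 2 * e"
proof -
  have "proj_dist x y \<le> proj_dist x p + proj_dist p q + proj_dist q y"
    by (meson add_mono order_refl order_trans proj_dist_triangle)
  also have "\<dots> \<le> norm (p - x) + norm (q - y)"
    using proj_dist_le_norm_diff[of x p] proj_dist_le_norm_diff[of q y] assms(3)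
    by (simp add: proj_dist_eq_0 norm_minus_commute)
  finally show ?thesis
    using assms(1,2) by linarith
qed

definition off_diag :: "'a set \<Rightarrow> ('a \<times> 'a) set" where
  "off_diag A = {(a, b). a \<in> A \<and> b \<in> A \<and> a \<noteq> b}"

lemma finite_off_diag: "finite A \<Longrightarrow> finite (off_diag A)"
  by (rule finite_subset[of _ "A \<times> A"]) (auto simp: off_diag_def)

lemma card_off_diag: "finite A \<Longrightarrow> card (off_diag A) = card A * (card A - 1)"
proof -
  assume A: "finite A"
  have "off_diag A = A \<times> A - (\<lambda>a. (a, a)) ` A"
    by (auto simp: off_diag_def)
  moreover have "card ((\<lambda>a. (a, a)) ` A) = card A"
    by (simp add: card_image inj_on_def)
  ultimately show ?thesis
    using A by (simp add: card_Diff_subset card_cartesian_product image_subset_iff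
        diff_mult_distrib2)
qed

lemma off_diag_image:
  "inj_on g A \<Longrightarrow> off_diag (g ` A) = map_prod g g ` off_diag A"
  by (auto simp: off_diag_def inj_on_def)

text \<open>Projective distances of unit vectors are at most \<open>2\<close>, so dividing the product of the
  \<open>N\<close> pairwise distances by \<open>2 ^ (N + 1)\<close> gives a continuous positive lower bound for half
  of each of them.\<close>

definition config_scale :: "('b \<Rightarrow> 'a::real_normed_vector) \<Rightarrow> 'b set \<Rightarrow> real" where
  "config_scale f A =
     (\<Prod>(a, b)\<in>off_diag A. proj_dist (f a) (f b)) / 2 ^ Suc (card (off_diag A))"

lemma config_scale_image:
  assumes "inj_on g A"
  shows "config_scale f (g ` A) = config_scale (f \<circ> g) A"
proof -
  have "inj_on (map_prod g g) (off_diag A)"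
    using assms by (auto simp: inj_on_def off_diag_def)
  then show ?thesis
    unfolding config_scale_def off_diag_image[OF assms]
    by (simp add: prod.reindex card_image case_prod_map_prod)
qed

lemma config_scale_sign_cong:
  assumes "\<And>a. a \<in> A \<Longrightarrow> f' a = f a \<or> f' a = - f a"
  shows "config_scale f' A = config_scale f A"
proof -
  have "proj_dist (f' a) (f' b) = proj_dist (f a) (f b)" if "(a, b) \<in> off_diag A" for a b
  proof -
    have "a \<in> A" "b \<in> A"
      using that by (auto simp: off_diag_def)
    then show ?thesis
      using assms[of a] assms[of b] by auto
  qed
  then show ?thesis
    unfolding config_scale_def by (auto intro!: prod.cong)
qed

lemma
  fixes f :: "'b \<Rightarrow> real^3"
  assumes A: "finite A" and unit: "\<And>a. a \<in> A \<Longrightarrow> norm (f a) = 1"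
    and inj: "inj_on (\<lambda>a. rp_class (f a)) A"
  shows config_scale_pos: "0 < config_scale f A"
    and config_scale_le_proj_dist:
      "\<And>a b. (a, b) \<in> off_diag A \<Longrightarrow> 2 * config_scale f A \<le> proj_dist (f a) (f b)"
proof -
  let ?d = "\<lambda>(a, b). proj_dist (f a) (f b)"
  have pos: "0 < ?d p" if "p \<in> off_diag A" for p
    using that inj by (auto simp: off_diag_def inj_on_def rp_class_eq_iff intro!: proj_dist_pos)
  have le2: "?d p \<le> 2" if "p \<in> off_diag A" for p
    using that unit by (auto simp: off_diag_def intro!: proj_dist_le_2)
  show "0 < config_scale f A"
    unfolding config_scale_def using pos by (simp add: prod_pos)
  fix a b assume ab: "(a, b) \<in> off_diag A"
  have fin: "finite (off_diag A)"
    using A by (rule finite_off_diag)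
  have "prod ?d (off_diag A) = ?d (a, b) * prod ?d (off_diag A - {(a, b)})"
    using ab fin by (simp add: prod.remove)
  also have "\<dots> \<le> ?d (a, b) * 2 ^ card (off_diag A)"
  proof (rule mult_left_mono)
    have "prod ?d (off_diag A - {(a, b)}) \<le> 2 ^ card (off_diag A - {(a, b)})"
      using pos le2 by (intro prod_le_power) (auto intro: less_imp_le)
    also have "\<dots> \<le> 2 ^ card (off_diag A)"
      using fin by (intro power_increasing card_mono) auto
    finally show "prod ?d (off_diag A - {(a, b)}) \<le> 2 ^ card (off_diag A)" .
  qed (use pos[OF ab] in simp)
  finally show "2 * config_scale f A \<le> proj_dist (f a) (f b)"
    by (simp add: config_scale_def field_simps)
qed

section \<open>Configurations lifted to the sphere\<close>

definition sphere_lifts :: "nat \<Rightarrow> (nat \<Rightarrow> real^3) topology" where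
  "sphere_lifts n = subtopology (product_topology (\<lambda>_. top_of_set (sphere 0 1)) {..<n})
     {v. inj_on (\<lambda>i. rp_class (v i)) {..<n}}"

lemma topspace_sphere_lifts:
  "topspace (sphere_lifts n) =
     {v \<in> PiE {..<n} (\<lambda>_. sphere 0 1). inj_on (\<lambda>i. rp_class (v i)) {..<n}}"
  by (auto simp: sphere_lifts_def)

lemma quotient_map_sphere_lifts:
  "quotient_map (sphere_lifts n) (uconf RP2 n) (\<lambda>v. (\<lambda>i. rp_class (v i)) ` {..<n})"
  unfolding sphere_lifts_def
  by (rule quotient_map_conf_lift[OF continuous_map_rp_class open_map_rp_class])
    (simp add: topspace_RP2)

lemma continuous_map_sphere_lifts_component:
  "i < n \<Longrightarrow> continuous_map (sphere_lifts n) (top_of_set (sphere 0 1)) (\<lambda>v. v i)"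
  unfolding sphere_lifts_def
  by (intro continuous_map_from_subtopology continuous_map_product_projection) simp

lemma continuous_map_sphere_lifts_component_euclidean [continuous_intros]:
  "i < n \<Longrightarrow> continuous_map (sphere_lifts n) euclidean (\<lambda>v. v i)"
  by (rule continuous_map_into_fulltopology[OF continuous_map_sphere_lifts_component])

context
  fixes n :: nat and v :: "nat \<Rightarrow> real^3"
  assumes v: "v \<in> topspace (sphere_lifts n)"
begin

lemma sphere_lift_unit: "i < n \<Longrightarrow> norm (v i) = 1"
  using v by (simp add: topspace_sphere_lifts PiE_iff)

lemma sphere_lift_inj: "inj_on (\<lambda>i. rp_class (v i)) {..<n}"
  using v by (simp add: topspace_sphere_lifts)

lemma sphere_lift_distinct:
  assumes "i < n" "j < n" "i \<noteq> j"
  shows "v i \<noteq> v j \<and> v i \<noteq> - v j"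
proof -
  have "rp_class (v i) \<noteq> rp_class (v j)"
    using sphere_lift_inj assms by (auto dest: inj_onD)
  then show ?thesis
    by (simp add: rp_class_eq_iff)
qed

lemma sphere_lift_sign_inj:
  assumes "j < n" "j' < n" "(if b then v j else - v j) = (if b' then v j' else - v j')"
  shows "j = j' \<and> b = b'"
proof -
  have "v j = v j' \<or> v j = - v j'"
    using assms(3) by (cases b; cases b'; simp; metis minus_minus)
  then have "j = j'"
    using sphere_lift_distinct assms(1,2) by blast
  moreover have "v j \<noteq> - v j"
    using sphere_lift_unit[OF assms(1)]
    by (metis add_eq_0_iff2 norm_zero scaleR_2 scaleR_eq_0_iff zero_neq_numeral zero_neq_one)
  ultimately show ?thesis
    using assms(3) by (auto split: if_splits)
qed

lemma sphere_lift_abs_inner_less_1: "i < n \<Longrightarrow> j < n \<Longrightarrow> i \<noteq> j \<Longrightarrow> \<bar>v i \<bullet> v j\<bar> < 1"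
  by (intro abs_inner_less_1) (simp_all add: sphere_lift_unit sphere_lift_distinct)

lemma sphere_lift_scale_pos: "0 < config_scale v {..<n}"
  using config_scale_pos[OF finite_lessThan _ sphere_lift_inj] sphere_lift_unit by simp

lemma sphere_lift_scale_le:
  "i < n \<Longrightarrow> j < n \<Longrightarrow> i \<noteq> j \<Longrightarrow> 2 * config_scale v {..<n} \<le> proj_dist (v i) (v j)"
  using config_scale_le_proj_dist[OF finite_lessThan _ sphere_lift_inj] sphere_lift_unit
  by (simp add: off_diag_def)

end

text \<open>The index \<open>((i, j), b, l)\<close> stands for the \<open>l\<close>-th step from \<open>v i\<close> towards \<open>v j\<close>
  (if \<open>b\<close>) or towards \<open>- v j\<close> (otherwise); steps from \<open>- v i\<close> give no new classes.\<close>

definition lift_index :: "nat \<Rightarrow> nat \<Rightarrow> ((nat \<times> nat) \<times> bool \<times> nat) set" where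
  "lift_index n L = off_diag {..<n} \<times> UNIV \<times> {..<L}"

definition lift_point :: "nat \<Rightarrow> nat \<Rightarrow> (nat \<Rightarrow> real^3) \<Rightarrow> (nat \<times> nat) \<times> bool \<times> nat \<Rightarrow> real^3" where
  "lift_point n L v =
     (\<lambda>((i, j), b, l). new_point L (config_scale v {..<n}) (v i) (if b then v j else - v j) l)"

lemma finite_lift_index: "finite (lift_index n L)"
  by (simp add: lift_index_def finite_off_diag)

lemma card_lift_index: "card (lift_index n L) = n * (n - 1) * 2 * L"
  by (simp add: lift_index_def card_cartesian_product card_off_diag)

lemma
  assumes v: "v \<in> topspace (sphere_lifts n)" and c: "((i, j), b, l) \<in> lift_index n L"
  shows norm_lift_point: "norm (lift_point n L v ((i, j), b, l)) = 1"
    and inner_lift_point_pos: "0 < v i \<bullet> lift_point n L v ((i, j), b, l)"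
    and inner_lift_point_less_1: "v i \<bullet> lift_point n L v ((i, j), b, l) < 1"
    and norm_lift_point_diff: "norm (lift_point n L v ((i, j), b, l) - v i) < config_scale v {..<n}"
proof -
  have ijl: "i < n" "j < n" "i \<noteq> j" "l < L"
    using c by (auto simp: lift_index_def off_diag_def)
  let ?y = "if b then v j else - v j"
  have "norm (v i) = 1" "norm ?y = 1" "\<bar>v i \<bullet> ?y\<bar> < 1"
      "0 < config_scale v {..<n}" "l < L"
    using sphere_lift_unit[OF v] sphere_lift_abs_inner_less_1[OF v] sphere_lift_scale_pos[OF v] ijl
    by auto
  note facts = this
  show "norm (lift_point n L v ((i, j), b, l)) = 1"
    and "0 < v i \<bullet> lift_point n L v ((i, j), b, l)"
    and "v i \<bullet> lift_point n L v ((i, j), b, l) < 1"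
    and "norm (lift_point n L v ((i, j), b, l) - v i) < config_scale v {..<n}"
    using norm_new_point[OF facts] inner_new_point_pos[OF facts] inner_new_point_less_1[OF facts]
      norm_new_point_diff[OF facts]
    by (simp_all add: lift_point_def)
qed

lemma rp_class_lift_point_neq:
  assumes v: "v \<in> topspace (sphere_lifts n)" and c: "c \<in> lift_index n L" and k: "k < n"
  shows "rp_class (lift_point n L v c) \<noteq> rp_class (v k)"
proof
  assume eq: "rp_class (lift_point n L v c) = rp_class (v k)"
  obtain i j b l where c_eq: "c = ((i, j), b, l)"
    by (metis prod.collapse)
  let ?p = "lift_point n L v c"
  note c' = c[unfolded c_eq]
  have i: "i < n"
    using c c_eq by (auto simp: lift_index_def off_diag_def)
  show False
  proof (cases "k = i")
    case True
    have "v i \<bullet> v i = 1"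
      using sphere_lift_unit[OF v i] by (simp flip: power2_norm_eq_inner)
    moreover have "?p = v i \<or> ?p = - v i"
      using eq True by (simp add: rp_class_eq_iff)
    moreover have "0 < v i \<bullet> ?p" "v i \<bullet> ?p < 1"
      using inner_lift_point_pos[OF v c'] inner_lift_point_less_1[OF v c'] c_eq by simp_all
    ultimately show False
      by auto
  next
    case False
    have "proj_dist (v i) (v k) < 2 * config_scale v {..<n}"
      using norm_lift_point_diff[OF v c'] sphere_lift_scale_pos[OF v] eq c_eq
      by (intro proj_dist_less_of_antipodal_eq[of ?p _ _ "v k"]) (simp_all add: rp_class_eq_iff)
    then show False
      using sphere_lift_scale_le[OF v i k] False by simp
  qed
qed

lemma inj_on_rp_class_lift_point:
  assumes v: "v \<in> topspace (sphere_lifts n)"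
  shows "inj_on (\<lambda>c. rp_class (lift_point n L v c)) (lift_index n L)"
proof (rule inj_onI)
  fix c c' assume c: "c \<in> lift_index n L" and c': "c' \<in> lift_index n L"
    and eq: "rp_class (lift_point n L v c) = rp_class (lift_point n L v c')"
  obtain i j b l where c_eq: "c = ((i, j), b, l)"
    by (metis prod.collapse)
  obtain i' j' b' l' where c'_eq: "c' = ((i', j'), b', l')"
    by (metis prod.collapse)
  let ?p = "lift_point n L v c" and ?p' = "lift_point n L v c'"
  note ci = c[unfolded c_eq] and ci' = c'[unfolded c'_eq]
  have ijl: "i < n" "j < n" "i \<noteq> j" "l < L" "i' < n" "j' < n" "i' \<noteq> j'" "l' < L"
    using c c' c_eq c'_eq by (auto simp: lift_index_def off_diag_def)
  have same_i: "i = i'"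
  proof (rule ccontr)
    assume "i \<noteq> i'"
    have "proj_dist (v i) (v i') < 2 * config_scale v {..<n}"
      using norm_lift_point_diff[OF v ci] norm_lift_point_diff[OF v ci'] eq c_eq c'_eq
      by (intro proj_dist_less_of_antipodal_eq) (simp_all add: rp_class_eq_iff)
    then show False
      using sphere_lift_scale_le[OF v ijl(1,5) \<open>i \<noteq> i'\<close>] by simp
  qed
  txt \<open>Both points lie in the open hemisphere centred at \<open>v i\<close>.\<close>
  have "?p \<noteq> - ?p'"
    using inner_lift_point_pos[OF v ci] inner_lift_point_pos[OF v ci'] c_eq c'_eq same_i by force
  then have "new_point L (config_scale v {..<n}) (v i) (if b then v j else - v j) l
      = new_point L (config_scale v {..<n}) (v i) (if b' then v j' else - v j') l'"
    using eq same_i by (simp add: rp_class_eq_iff c_eq c'_eq lift_point_def)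
  moreover have "norm (v i) = 1" "norm (if b then v j else - v j) = 1"
    "\<bar>v i \<bullet> (if b then v j else - v j)\<bar> < 1" "norm (if b' then v j' else - v j') = 1"
    "\<bar>v i \<bullet> (if b' then v j' else - v j')\<bar> < 1"
    using sphere_lift_unit[OF v] sphere_lift_abs_inner_less_1[OF v] ijl same_i by auto
  ultimately have "l = l'" and "(if b then v j else - v j) = (if b' then v j' else - v j')"
    using new_point_inj sphere_lift_scale_pos[OF v] ijl(4,8) by blast+
  then show "c = c'"
    using sphere_lift_sign_inj[OF v ijl(2,6)] c_eq c'_eq same_i by simp
qed

lemma continuous_map_sphere_lifts_scale:
  "continuous_map (sphere_lifts n) euclideanreal (\<lambda>v. config_scale v {..<n})"
  unfolding config_scale_def case_prod_unfold
  by (intro continuous_intros finite_off_diag finite_lessThan) (auto simp: off_diag_def)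

lemma continuous_map_lift_point:
  assumes c: "c \<in> lift_index n L"
  shows "continuous_map (sphere_lifts n) (top_of_set (sphere 0 1)) (\<lambda>v. lift_point n L v c)"
proof -
  obtain i j b l where c_eq: "c = ((i, j), b, l)"
    by (metis prod.collapse)
  have ijl: "i < n" "j < n" "i \<noteq> j" "l < L"
    using c c_eq by (auto simp: lift_index_def off_diag_def)
  let ?y = "\<lambda>v. if b then v j else - v j"
  have y: "continuous_map (sphere_lifts n) euclidean ?y"
    using ijl by (cases b) (simp_all add: continuous_intros)
  have w: "norm (?y v - (v i \<bullet> ?y v) *\<^sub>R v i) \<noteq> 0" if "v \<in> topspace (sphere_lifts n)" for v
    using sphere_lift_unit[OF that] sphere_lift_abs_inner_less_1[OF that] ijl
    unfolding norm_eq_zero by (intro tangent_component_nonzero) auto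
  have sq: "sqrt (1 + t\<^sup>2) \<noteq> 0" for t :: real
    by (simp add: add_nonneg_eq_0_iff)
  have "continuous_map (sphere_lifts n) euclidean (\<lambda>v. lift_point n L v c)"
    unfolding c_eq lift_point_def prod.case new_point_def sphere_step_def tangent_dir_def
      step_length_def sgn_div_norm
    using ijl y w sq continuous_map_sphere_lifts_scale
    by (intro continuous_intros) auto
  moreover have "lift_point n L v c \<in> sphere 0 1" if "v \<in> topspace (sphere_lifts n)" for v
    using norm_lift_point[OF that c[unfolded c_eq]] c_eq by simp
  ultimately show ?thesis
    by (auto intro: continuous_map_into_subtopology)
qed

section \<open>The cross-section\<close>

text \<open>Any choice of representatives gives the same scale, see \<open>config_scale_rp_classes\<close>.\<close>

definition new_points :: "nat \<Rightarrow> (real^3) set set \<Rightarrow> (real^3) set set" where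
  "new_points L P =
     {rp_class (new_point L (config_scale (\<lambda>a. SOME x. x \<in> a) P) x y l) | x y l.
        (\<exists>(a, b)\<in>off_diag P. x \<in> a \<and> y \<in> b) \<and> l < L}"

lemma config_scale_rp_classes:
  assumes v: "v \<in> topspace (sphere_lifts n)"
  shows "config_scale (\<lambda>a. SOME x. x \<in> a) ((\<lambda>i. rp_class (v i)) ` {..<n}) = config_scale v {..<n}"
proof -
  have "(SOME x. x \<in> rp_class (v i)) = v i \<or> (SOME x. x \<in> rp_class (v i)) = - v i" for i
    using someI[of "\<lambda>x. x \<in> rp_class (v i)" "v i"] by (simp add: mem_rp_class)
  then show ?thesis
    unfolding config_scale_image[OF sphere_lift_inj[OF v]]
    by (intro config_scale_sign_cong) auto
qed

lemma new_points_sphere_lift: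
  assumes v: "v \<in> topspace (sphere_lifts n)"
  shows "new_points L ((\<lambda>i. rp_class (v i)) ` {..<n})
    = (\<lambda>c. rp_class (lift_point n L v c)) ` lift_index n L"
    (is "new_points L ?P = _")
proof -
  let ?e = "config_scale v {..<n}"
  have off: "off_diag ?P = map_prod (\<lambda>i. rp_class (v i)) (\<lambda>i. rp_class (v i)) ` off_diag {..<n}"
    by (rule off_diag_image[OF sphere_lift_inj[OF v]])
  have scale: "config_scale (\<lambda>a. SOME x. x \<in> a) ?P = ?e"
    by (rule config_scale_rp_classes[OF v])
  show ?thesis
  proof
    show "new_points L ?P \<subseteq> (\<lambda>c. rp_class (lift_point n L v c)) ` lift_index n L"
    proof
      fix z assume "z \<in> new_points L ?P"
      then obtain x y l a b where z: "z = rp_class (new_point L ?e x y l)"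
        and ab: "(a, b) \<in> off_diag ?P" and xy: "x \<in> a" "y \<in> b" and l: "l < L"
        unfolding new_points_def scale by blast
      obtain i j where ij: "(i, j) \<in> off_diag {..<n}" "a = rp_class (v i)" "b = rp_class (v j)"
        using ab unfolding off by auto
      obtain y' where y': "z = rp_class (new_point L ?e (v i) y' l)" and "y' \<in> rp_class (v j)"
        using z xy ij by (auto simp: mem_rp_class new_point_uminus)
      then have "y' = (if y' = v j then v j else - v j)"
        by (auto simp: mem_rp_class)
      then have "z = rp_class (lift_point n L v ((i, j), y' = v j, l))"
        using y' by (simp add: lift_point_def)
      moreover have "((i, j), y' = v j, l) \<in> lift_index n L"
        using ij l by (simp add: lift_index_def)
      ultimately show "z \<in> (\<lambda>c. rp_class (lift_point n L v c)) ` lift_index n L"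
        by (rule image_eqI)
    qed
    show "(\<lambda>c. rp_class (lift_point n L v c)) ` lift_index n L \<subseteq> new_points L ?P"
    proof
      fix z assume "z \<in> (\<lambda>c. rp_class (lift_point n L v c)) ` lift_index n L"
      then obtain i j bj l where c: "((i, j), bj, l) \<in> lift_index n L"
        and z: "z = rp_class (new_point L ?e (v i) (if bj then v j else - v j) l)"
        by (auto simp: lift_point_def)
      have "(rp_class (v i), rp_class (v j)) \<in> off_diag ?P" "l < L"
        using c unfolding off by (auto simp: lift_index_def)
      moreover have "v i \<in> rp_class (v i)" "(if bj then v j else - v j) \<in> rp_class (v j)"
        by (simp_all add: mem_rp_class)
      ultimately show "z \<in> new_points L ?P"
        unfolding new_points_def scale z by blast
    qed
  qed
qed

definition lifted_section ::
    "nat \<Rightarrow> nat \<Rightarrow> (nat \<Rightarrow> (nat \<times> nat) \<times> bool \<times> nat) \<Rightarrow> (nat \<Rightarrow> real^3) \<Rightarrow> nat \<Rightarrow> (real^3) set"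
  where
  "lifted_section n L e v =
     restrict (seq_append n (\<lambda>i. rp_class (v i)) (\<lambda>k. rp_class (lift_point n L v (e k))))
       {..<n + card (lift_index n L)}"

lemma lifted_section_image_old:
  "lifted_section n L e v ` {..<n} = (\<lambda>i. rp_class (v i)) ` {..<n}"
  by (simp add: lifted_section_def seq_append_image_lessThan)

context
  fixes n L :: nat and e :: "nat \<Rightarrow> (nat \<times> nat) \<times> bool \<times> nat"
  assumes e: "bij_betw e {..<card (lift_index n L)} (lift_index n L)"
begin

lemma lift_enum_in: "k < card (lift_index n L) \<Longrightarrow> e k \<in> lift_index n L"
  using e by (auto dest: bij_betwE)

lemma lifted_section_image_new:
  assumes v: "v \<in> topspace (sphere_lifts n)"
  shows "lifted_section n L e v ` {n..<n + card (lift_index n L)}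
    = new_points L ((\<lambda>i. rp_class (v i)) ` {..<n})"
proof -
  have "lifted_section n L e v ` {n..<n + card (lift_index n L)}
      = seq_append n (\<lambda>i. rp_class (v i)) (\<lambda>k. rp_class (lift_point n L v (e k)))
          ` {n..<n + card (lift_index n L)}"
    unfolding lifted_section_def by (intro image_cong) auto
  also have "\<dots> = (\<lambda>k. rp_class (lift_point n L v (e k))) ` {..<card (lift_index n L)}"
    by (rule seq_append_image_shift)
  also have "\<dots> = (\<lambda>c. rp_class (lift_point n L v c)) ` e ` {..<card (lift_index n L)}"
    by (simp add: image_image)
  also have "\<dots> = (\<lambda>c. rp_class (lift_point n L v c)) ` lift_index n L"
    using bij_betw_imp_surj_on[OF e] by simp
  finally show ?thesis
    by (simp add: new_points_sphere_lift[OF v])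
qed

lemma continuous_map_lifted_section:
  "continuous_map (sphere_lifts n) (conf RP2 (n + card (lift_index n L))) (lifted_section n L e)"
  unfolding continuous_map_conf_iff
proof (intro conjI allI impI ballI)
  fix k assume k: "k < n + card (lift_index n L)"
  show "continuous_map (sphere_lifts n) RP2 (\<lambda>v. lifted_section n L e v k)"
  proof (cases "k < n")
    case True
    show ?thesis
      by (rule continuous_map_eq[OF continuous_map_compose[OF
            continuous_map_sphere_lifts_component[OF True] continuous_map_rp_class]])
        (use k True in \<open>simp add: lifted_section_def seq_append_def\<close>)
  next
    case False
    then have "e (k - n) \<in> lift_index n L"
      using k by (intro lift_enum_in) simp
    then show ?thesis
      by (rule continuous_map_eq[OF continuous_map_compose[OF
            continuous_map_lift_point continuous_map_rp_class]])
        (use k False in \<open>simp add: lifted_section_def seq_append_def\<close>)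
  qed
next
  fix v assume v: "v \<in> topspace (sphere_lifts n)"
  show "lifted_section n L e v \<in> extensional {..<n + card (lift_index n L)}"
    by (simp add: lifted_section_def)
  have "inj_on (\<lambda>k. rp_class (lift_point n L v (e k))) {..<card (lift_index n L)}"
    using comp_inj_on[of e _ "\<lambda>c. rp_class (lift_point n L v c)"] inj_on_rp_class_lift_point[OF v] e
    by (simp add: bij_betw_def o_def)
  moreover have "rp_class (v i) \<noteq> rp_class (lift_point n L v (e k))"
    if "i < n" "k < card (lift_index n L)" for i k
    using rp_class_lift_point_neq[OF v lift_enum_in[OF that(2)] that(1)] by (rule not_sym)
  then have "(\<lambda>i. rp_class (v i)) ` {..<n}
      \<inter> (\<lambda>k. rp_class (lift_point n L v (e k))) ` {..<card (lift_index n L)} = {}"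
    by auto
  ultimately have "inj_on (seq_append n (\<lambda>i. rp_class (v i)) (\<lambda>k. rp_class (lift_point n L v (e k))))
      {..<n + card (lift_index n L)}"
    by (rule inj_on_seq_append[OF sphere_lift_inj[OF v]])
  then show "inj_on (lifted_section n L e v) {..<n + card (lift_index n L)}"
    by (simp add: lifted_section_def)
qed

end

lemma has_cross_section_RP2: "has_cross_section RP2 n (2 * L * n * (n - 1))"
proof -
  obtain e where e: "bij_betw e {..<card (lift_index n L)} (lift_index n L)"
    using ex_bij_betw_nat_finite[OF finite_lift_index] by (auto simp: lessThan_atLeast0)
  have "has_cross_section RP2 n (card (lift_index n L))"
    by (rule has_cross_section_from_lift[OF quotient_map_sphere_lifts
          continuous_map_lifted_section[OF e] lifted_section_image_old lifted_section_image_new[OF e]])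
  then show ?thesis
    by (simp add: card_lift_index ac_simps)
qed

theorem theoremD:
  fixes n :: nat
  assumes "n \<ge> 3"
  shows "(\<forall>k::nat. k \<ge> 1 \<longrightarrow> has_cross_section RP2 n (k * n * (2*n - 1) * (2*n - 2)))
         \<and> has_cross_section RP2 n (2 * n * (n - 1))"
proof (intro conjI allI impI)
  fix k :: nat
  have "2*n - 2 = 2 * (n - 1)"
    by simp
  then have "k * n * (2*n - 1) * (2*n - 2) = 2 * (k * (2*n - 1)) * n * (n - 1)"
    by (simp only: mult_ac)
  then show "has_cross_section RP2 n (k * n * (2*n - 1) * (2*n - 2))"
    by (simp only: has_cross_section_RP2)
next
  show "has_cross_section RP2 n (2 * n * (n - 1))"
    using has_cross_section_RP2[of n 1] by simp
qed

end
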